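(* Let $S_{r,N}$ be a nontrivial atomic exponential Puiseux semiring. Then for every $k\in\mathbb{N}$ and every positive integer $n$, $r^{s_k}$ does not divide $\sum_{i=1}^{n}r^{s_{k+i}}$ in $S_{r,N}$. Consequently, $S_{r,N}$ is not strongly primary.
   Context: $\mathbb{N}=\{0,1,2,\dots\}$. A numerical monoid $N$ is an additive submonoid of $\mathbb{N}$ with finite complement; let $s_0<s_1<\cdots$ be its elements. For $r\in\mathbb{Q}_{>0}$ write $r=\mathsf{n}(r)/\mathsf{d}(r)$ in lowest terms. $S_{r,N}$ is the additive submonoid of $\mathbb{Q}_{\ge0}$ generated by $\{r^k:k\in N\}$; nontrivial means $r\notin\mathbb{N}$, and then it is atomic iff $\mathsf{n}(r)>1$. In a monoid $M$, $y\mid_M w$ means $w-y\in M$. A (commutative, cancellative) monoid $M$ with group of units $M^\times$ is strongly primary if $M\neq M^\times$ and for every $x\in M\setminus M^\times$ there exists $n\in\mathbb{N}$ such that every sum of $n$ elements of $M\setminus M^\times$ is divisible by $x$ (i.e., $(M\setminus M^\times)^n\subseteq x+M$ in additive notation). *)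

theory Defs
  imports Complex_Main "HOL-Library.Infinite_Set"
begin

definition numerical_monoid :: "nat set \<Rightarrow> bool" where
  "numerical_monoid N \<longleftrightarrow> 0 \<in> N \<and> (\<forall>a\<in>N. \<forall>b\<in>N. a + b \<in> N) \<and> finite (UNIV - N)"

text \<open>The k-th element s_k of N in increasing order (s_0 < s_1 < ...).\<close>
definition nm_elem :: "nat set \<Rightarrow> nat \<Rightarrow> nat" where
  "nm_elem N k = enumerate N k"

definition numer :: "rat \<Rightarrow> int" where "numer r = fst (quotient_of r)"
definition denom :: "rat \<Rightarrow> int" where "denom r = snd (quotient_of r)"

inductive_set add_monoid_gen :: "rat set \<Rightarrow> rat set" for A :: "rat set" where
  zero: "0 \<in> add_monoid_gen A"
| gen: "a \<in> A \<Longrightarrow> a \<in> add_monoid_gen A"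
| add: "x \<in> add_monoid_gen A \<Longrightarrow> y \<in> add_monoid_gen A \<Longrightarrow> x + y \<in> add_monoid_gen A"

definition exp_puiseux :: "rat \<Rightarrow> nat set \<Rightarrow> rat set" where
  "exp_puiseux r N = add_monoid_gen {r ^ k | k. k \<in> N}"

definition mdvd :: "rat set \<Rightarrow> rat \<Rightarrow> rat \<Rightarrow> bool" where
  "mdvd M y w \<longleftrightarrow> w - y \<in> M"

definition munits :: "rat set \<Rightarrow> rat set" where
  "munits M = {x \<in> M. - x \<in> M}"

definition strongly_primary :: "rat set \<Rightarrow> bool" where
  "strongly_primary M \<longleftrightarrow> M \<noteq> munits M \<and>
     (\<forall>x \<in> M - munits M. \<exists>n::nat. \<forall>xs. length xs = n \<and> set xs \<subseteq> M - munits M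
        \<longrightarrow> mdvd M x (sum_list xs))"

end

theory Submission
  imports Defs
begin

text \<open>Write \<open>r = a/b\<close> in lowest terms, so \<open>a > 0\<close> and \<open>b \<ge> 2\<close>. A divisibility
  \<open>r^K | \<Sum>\<^sub>e\<^sub>\<in>\<^sub>E r^e\<close> with all \<open>e > K\<close> gives \<open>\<Sum>\<^sub>j p\<^sub>j r^j = 0\<close> for an integer coefficient
  sequence with \<open>p\<^sub>j \<le> 0\<close> below \<open>K\<close>, \<open>p\<^sub>K < 0\<close> and \<open>p\<^sub>j \<le> 1\<close> above \<open>K\<close>.
  Clearing denominators, the partial sums \<open>T\<^sub>m = \<Sum>\<^sub>j\<^sub>\<le>\<^sub>m p\<^sub>j a^j b^(m-j)\<close> satisfy
  \<open>T\<^sub>m\<^sub>+\<^sub>1 = b T\<^sub>m + p\<^sub>m\<^sub>+\<^sub>1 a^(m+1)\<close>, and since the total sum vanishes and \<open>a\<close> is coprime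
  to \<open>b\<close>, every \<open>T\<^sub>m\<close> is divisible by \<open>a^(m+1)\<close>. Hence once some \<open>T\<^sub>m\<close> is negative it is
  at most \<open>-a^(m+1)\<close>, and a coefficient \<open>\<le> 1\<close> cannot bring \<open>b T\<^sub>m \<le> -2a^(m+1)\<close> back to
  \<open>0\<close>; so all later partial sums stay negative, contradicting that the last one is \<open>0\<close>.
  Taking \<open>K = s\<^sub>0 = 0\<close> and the elements \<open>r^s\<^sub>1, \<dots>, r^s\<^sub>n\<close> shows that the non-unit \<open>1\<close>
  witnesses the failure of strong primality.\<close>

definition scaled_partial_sum :: "(nat \<Rightarrow> int) \<Rightarrow> int \<Rightarrow> int \<Rightarrow> nat \<Rightarrow> int" where
  "scaled_partial_sum p a b m = (\<Sum>j\<le>m. p j * a ^ j * b ^ (m - j))"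

lemma scaled_partial_sum_0 [simp]: "scaled_partial_sum p a b 0 = p 0"
  by (simp add: scaled_partial_sum_def)

lemma scaled_partial_sum_Suc:
  "scaled_partial_sum p a b (Suc m) = b * scaled_partial_sum p a b m + p (Suc m) * a ^ Suc m"
proof -
  have "(\<Sum>j\<le>m. p j * a ^ j * b ^ (Suc m - j)) = b * scaled_partial_sum p a b m"
    unfolding scaled_partial_sum_def sum_distrib_left
    by (rule sum.cong) (auto simp: Suc_diff_le)
  then show ?thesis
    by (simp add: scaled_partial_sum_def)
qed

lemma of_int_scaled_partial_sum:
  fixes a b :: int
  assumes "b \<noteq> 0"
  shows "(of_int (scaled_partial_sum p a b D) :: 'a :: field_char_0) =
         of_int b ^ D * (\<Sum>j\<le>D. of_int (p j) * (of_int a / of_int b) ^ j)"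
  unfolding scaled_partial_sum_def of_int_sum sum_distrib_left
proof (rule sum.cong)
  fix j assume "j \<in> {..D}"
  then have "(of_int b :: 'a) ^ D = of_int b ^ j * of_int b ^ (D - j)"
    by (simp flip: power_add)
  then show "of_int (p j * a ^ j * b ^ (D - j)) =
             (of_int b :: 'a) ^ D * (of_int (p j) * (of_int a / of_int b) ^ j)"
    using assms by (simp add: power_divide field_simps)
qed simp

lemma scaled_partial_sum_dvd:
  fixes a b :: int
  assumes "coprime a b" and "scaled_partial_sum p a b D = 0" and "m \<le> D"
  shows "a ^ Suc m dvd scaled_partial_sum p a b m"
  using assms(3)
proof (induction m rule: inc_induct)
  case base
  then show ?case using assms(2) by simp
next
  case (step m)
  \<comment> \<open>Both \<open>T\<^sub>m\<^sub>+\<^sub>1\<close> and \<open>p\<^sub>m\<^sub>+\<^sub>1 a^(m+1)\<close> are multiples of \<open>a^(m+1)\<close>, hence so is \<open>b T\<^sub>m\<close>.\<close>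
  have "a ^ Suc m dvd scaled_partial_sum p a b (Suc m)"
    using step.IH by (rule dvd_trans[rotated]) (simp add: le_imp_power_dvd)
  then have "a ^ Suc m dvd b * scaled_partial_sum p a b m"
    by (simp add: scaled_partial_sum_Suc dvd_add_left_iff)
  moreover have "coprime (a ^ Suc m) b"
    using assms(1) by simp
  ultimately show ?case
    using coprime_dvd_mult_right_iff by blast
qed

lemma scaled_partial_sum_neg_at_first_negative:
  fixes a b :: int
  assumes "a > 0" and "b \<ge> 0" and "\<forall>j<K. p j \<le> 0" and "p K < 0"
  shows "scaled_partial_sum p a b K < 0"
proof (cases K)
  case 0
  then show ?thesis using assms(4) by simp
next
  case (Suc k)
  have "scaled_partial_sum p a b k \<le> 0"
    unfolding scaled_partial_sum_def
    using Suc assms(1-3) by (intro sum_nonpos) (simp add: mult_nonpos_nonneg)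
  then have "b * scaled_partial_sum p a b k \<le> 0"
    using assms(2) by (simp add: mult_nonneg_nonpos)
  moreover have "p K * a ^ K < 0"
    using assms(1,4) by (simp add: mult_neg_pos)
  ultimately show ?thesis
    using Suc by (simp add: scaled_partial_sum_Suc)
qed

lemma scaled_partial_sum_nonzero:
  fixes a b :: int
  assumes a: "a > 0" and b: "b \<ge> 2" and cop: "coprime a b" and "K \<le> D"
    and low: "\<forall>j<K. p j \<le> 0" and first: "p K < 0" and high: "\<forall>j>K. p j \<le> 1"
  shows "scaled_partial_sum p a b D \<noteq> 0"
proof
  assume zero: "scaled_partial_sum p a b D = 0"
  have neg: "m \<le> D \<Longrightarrow> scaled_partial_sum p a b m < 0" if "K \<le> m" for m
    using that
  proof (induction m rule: dec_induct)
    case base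
    show ?case
      using scaled_partial_sum_neg_at_first_negative[OF a _ low first] b by simp
  next
    case (step m)
    obtain c where c: "scaled_partial_sum p a b m = a ^ Suc m * c"
      using scaled_partial_sum_dvd[OF cop zero] step.prems by (meson dvdE Suc_leD)
    have pos: "a ^ Suc m > 0"
      using a by simp
    have "scaled_partial_sum p a b m < 0"
      using step by simp
    then have "c < 0"
      using c pos by (metis mult_nonneg_nonneg not_le less_imp_le)
    then have "c \<le> -1"
      by simp
    then have "scaled_partial_sum p a b m \<le> - (a ^ Suc m)"
      using c pos mult_left_mono[of c "-1" "a ^ Suc m"] by simp
    moreover have "b * scaled_partial_sum p a b m \<le> 2 * scaled_partial_sum p a b m"
      using b \<open>scaled_partial_sum p a b m < 0\<close> by (intro mult_right_mono_neg) auto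
    ultimately have "b * scaled_partial_sum p a b m \<le> - (2 * a ^ Suc m)"
      by linarith
    moreover have "p (Suc m) * a ^ Suc m \<le> a ^ Suc m"
      using high step.hyps pos mult_right_mono[of "p (Suc m)" 1 "a ^ Suc m"] by simp
    ultimately show ?case
      using pos by (simp add: scaled_partial_sum_Suc)
  qed
  then show False
    using neg[OF \<open>K \<le> D\<close> order_refl] zero by simp
qed

lemma power_sum_nonzero:
  fixes r :: rat and p :: "nat \<Rightarrow> int"
  assumes "r > 0" and "r \<notin> \<int>" and "K \<le> D"
    and "\<forall>j<K. p j \<le> 0" and "p K < 0" and "\<forall>j>K. p j \<le> 1"
  shows "(\<Sum>j\<le>D. of_int (p j) * r ^ j) \<noteq> 0"
proof -
  obtain a b where q: "quotient_of r = (a, b)"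
    by fastforce
  have r: "r = of_int a / of_int b" and "b > 0" and "coprime a b"
    using quotient_of_div[OF q] quotient_of_denom_pos[OF q] quotient_of_coprime[OF q] by auto
  have "a > 0"
    using \<open>r > 0\<close> \<open>b > 0\<close> r by (simp add: zero_less_divide_iff)
  have "b \<noteq> 0"
    using \<open>b > 0\<close> by simp
  have "b \<noteq> 1"
    using \<open>r \<notin> \<int>\<close> r by auto
  then have "b \<ge> 2"
    using \<open>b > 0\<close> by simp
  have "scaled_partial_sum p a b D \<noteq> 0"
    using scaled_partial_sum_nonzero \<open>a > 0\<close> \<open>b \<ge> 2\<close> \<open>coprime a b\<close> assms(3-6) by blast
  then have "(of_int (scaled_partial_sum p a b D) :: rat) \<noteq> 0"
    by simp
  then show ?thesis
    unfolding of_int_scaled_partial_sum[OF \<open>b \<noteq> 0\<close>] r by simp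
qed

lemma power_in_exp_puiseux: "k \<in> N \<Longrightarrow> r ^ k \<in> exp_puiseux r N"
  unfolding exp_puiseux_def by (intro add_monoid_gen.gen) auto

lemma exp_puiseux_nonneg:
  assumes "r > 0" and "x \<in> exp_puiseux r N"
  shows "x \<ge> 0"
  using assms(2) unfolding exp_puiseux_def
  by (induction rule: add_monoid_gen.induct) (use assms(1) in auto)

lemma munits_exp_puiseux:
  assumes "r > 0"
  shows "munits (exp_puiseux r N) = {0}"
proof -
  have "0 \<in> exp_puiseux r N"
    unfolding exp_puiseux_def by (rule add_monoid_gen.zero)
  moreover have "x = 0" if "x \<in> exp_puiseux r N" "- x \<in> exp_puiseux r N" for x
    using exp_puiseux_nonneg[OF assms that(1)] exp_puiseux_nonneg[OF assms that(2)] by simp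
  ultimately show ?thesis
    unfolding munits_def by auto
qed

lemma exp_puiseux_power_expansion:
  assumes "x \<in> exp_puiseux r N"
  shows "\<exists>c :: nat \<Rightarrow> nat. \<forall>\<^sub>F D in sequentially. x = (\<Sum>j\<le>D. of_nat (c j) * r ^ j)"
  using assms unfolding exp_puiseux_def
proof (induction rule: add_monoid_gen.induct)
  case zero
  show ?case
    by (rule exI[of _ "\<lambda>_. 0"]) simp
next
  case (gen a)
  then obtain k where a: "a = r ^ k"
    by blast
  have "\<forall>\<^sub>F D in sequentially. a = (\<Sum>j\<le>D. of_nat (of_bool (j = k)) * r ^ j)"
    using eventually_ge_at_top[of k] by (rule eventually_mono) (simp add: a sum.delta')
  then show ?case
    by (rule exI[of _ "\<lambda>j. of_bool (j = k)"])
next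
  case (add x y)
  then obtain c d where
    "\<forall>\<^sub>F D in sequentially. x = (\<Sum>j\<le>D. of_nat (c j) * r ^ j)"
    "\<forall>\<^sub>F D in sequentially. y = (\<Sum>j\<le>D. of_nat (d j) * r ^ j)"
    by blast
  then have "\<forall>\<^sub>F D in sequentially. x + y = (\<Sum>j\<le>D. of_nat (c j + d j) * r ^ j)"
    by eventually_elim (simp add: sum.distrib distrib_right)
  then show ?case
    by (rule exI[of _ "\<lambda>j. c j + d j"])
qed

lemma not_mdvd_sum_higher_powers:
  fixes r :: rat
  assumes "r > 0" and "r \<notin> \<int>" and "finite E" and higher: "\<forall>e\<in>E. K < e"
  shows "\<not> mdvd (exp_puiseux r N) (r ^ K) (\<Sum>e\<in>E. r ^ e)"
proof
  assume "mdvd (exp_puiseux r N) (r ^ K) (\<Sum>e\<in>E. r ^ e)"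
  then obtain c :: "nat \<Rightarrow> nat" where
    "\<forall>\<^sub>F D in sequentially. (\<Sum>e\<in>E. r ^ e) - r ^ K = (\<Sum>j\<le>D. of_nat (c j) * r ^ j)"
    unfolding mdvd_def using exp_puiseux_power_expansion by blast
  then obtain D0 where
    D0: "\<And>D. D \<ge> D0 \<Longrightarrow> (\<Sum>e\<in>E. r ^ e) - r ^ K = (\<Sum>j\<le>D. of_nat (c j) * r ^ j)"
    unfolding eventually_sequentially by blast
  define D where "D = max D0 (Max (insert K E))"
  have c: "(\<Sum>e\<in>E. r ^ e) - r ^ K = (\<Sum>j\<le>D. of_nat (c j) * r ^ j)"
    using D0 by (simp add: D_def)
  have "K \<le> D" and "E \<subseteq> {..D}"
    using \<open>finite E\<close> by (auto simp: D_def le_max_iff_disj)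
  define p where "p j = of_bool (j \<in> E) - of_bool (j = K) - int (c j)" for j
  have "(\<Sum>j\<le>D. of_int (p j) * r ^ j) =
        (\<Sum>j\<le>D. if j \<in> E then r ^ j else 0) - (\<Sum>j\<le>D. if j = K then r ^ j else 0)
        - (\<Sum>j\<le>D. of_nat (c j) * r ^ j)"
    unfolding sum_subtractf[symmetric] by (intro sum.cong) (auto simp: p_def algebra_simps)
  also have "(\<Sum>j\<le>D. if j \<in> E then r ^ j else 0) = (\<Sum>e\<in>E. r ^ e)"
    using \<open>E \<subseteq> {..D}\<close> by (simp add: sum.inter_restrict[symmetric] Int_absorb1)
  also have "(\<Sum>j\<le>D. if j = K then r ^ j else 0) = r ^ K"
    using \<open>K \<le> D\<close> by (simp add: sum.delta')
  finally have "(\<Sum>j\<le>D. of_int (p j) * r ^ j) = 0"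
    using c by simp
  moreover have "(\<Sum>j\<le>D. of_int (p j) * r ^ j) \<noteq> 0"
    using higher by (intro power_sum_nonzero[OF assms(1,2) \<open>K \<le> D\<close>]) (auto simp: p_def)
  ultimately show False
    by contradiction
qed

lemma not_mdvd_enumerate_power_sum:
  fixes r :: rat
  assumes "r > 0" and "r \<notin> \<int>" and "infinite A"
  shows "\<not> mdvd (exp_puiseux r N) (r ^ enumerate A k) (\<Sum>i=1..n. r ^ enumerate A (k + i))"
proof -
  have mono: "strict_mono (enumerate A)"
    using strict_mono_enumerate[OF assms(3)] .
  have "inj_on (\<lambda>i. enumerate A (k + i)) {1..n}"
    by (rule inj_onI) (simp add: strict_mono_eq[OF mono])
  then have reindex: "(\<Sum>i=1..n. r ^ enumerate A (k + i)) =
      (\<Sum>e\<in>(\<lambda>i. enumerate A (k + i)) ` {1..n}. r ^ e)"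
    by (simp only: sum.reindex o_def)
  have "\<forall>e\<in>(\<lambda>i. enumerate A (k + i)) ` {1..n}. enumerate A k < e"
    by (auto simp: strict_mono_less[OF mono])
  then show ?thesis
    unfolding reindex by (intro not_mdvd_sum_higher_powers[OF assms(1,2)]) auto
qed

lemma not_strongly_primaryI:
  assumes "x \<in> M - munits M"
    and "\<And>n. \<exists>xs. length xs = n \<and> set xs \<subseteq> M - munits M \<and> \<not> mdvd M x (sum_list xs)"
  shows "\<not> strongly_primary M"
  using assms unfolding strongly_primary_def by blast

lemma numerical_monoid_infinite: "numerical_monoid N \<Longrightarrow> infinite N"
  unfolding numerical_monoid_def by (metis finite_Diff2 infinite_UNIV_nat)

theorem mainTheorem17:
  fixes r :: rat and N :: "nat set"
  assumes "numerical_monoid N"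
    and "r > 0"
    and "r \<notin> \<nat>"
    and "numer r > 1"
  shows "(\<forall>k n. n > 0 \<longrightarrow>
            \<not> mdvd (exp_puiseux r N) (r ^ nm_elem N k)
                 (\<Sum>i=1..n. r ^ nm_elem N (k + i)))
         \<and> \<not> strongly_primary (exp_puiseux r N)"
proof -
  have "r \<notin> \<int>"
  proof
    assume "r \<in> \<int>"
    then obtain z where "r = of_int z"
      by (rule Ints_cases)
    with \<open>r > 0\<close> have "r = of_nat (nat z)"
      by simp
    with \<open>r \<notin> \<nat>\<close> show False
      by simp
  qed
  have not_mdvd: "\<not> mdvd (exp_puiseux r N) (r ^ nm_elem N k) (\<Sum>i=1..n. r ^ nm_elem N (k + i))"
    for k n
    unfolding nm_elem_def
    using not_mdvd_enumerate_power_sum[OF \<open>r > 0\<close> \<open>r \<notin> \<int>\<close> numerical_monoid_infinite[OF assms(1)]] .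
  have "\<not> strongly_primary (exp_puiseux r N)"
  proof (rule not_strongly_primaryI)
    have "r ^ nm_elem N 0 \<in> exp_puiseux r N"
      unfolding nm_elem_def
      by (intro power_in_exp_puiseux enumerate_in_set numerical_monoid_infinite assms(1))
    then show "r ^ nm_elem N 0 \<in> exp_puiseux r N - munits (exp_puiseux r N)"
      using munits_exp_puiseux[OF \<open>r > 0\<close>] \<open>r > 0\<close> by simp
  next
    fix n
    define xs where "xs = map (\<lambda>i. r ^ nm_elem N i) [1..<Suc n]"
    have sum_xs: "sum_list xs = (\<Sum>i=1..n. r ^ nm_elem N (0 + i))"
      unfolding xs_def interv_sum_list_conv_sum_set_nat set_upt atLeastLessThanSuc_atLeastAtMost
      by simp
    have "set xs \<subseteq> exp_puiseux r N - munits (exp_puiseux r N)"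
      using munits_exp_puiseux[OF \<open>r > 0\<close>] \<open>r > 0\<close> unfolding xs_def nm_elem_def
      by (auto intro!: power_in_exp_puiseux enumerate_in_set numerical_monoid_infinite assms(1))
    moreover have "length xs = n"
      by (simp add: xs_def)
    moreover have "\<not> mdvd (exp_puiseux r N) (r ^ nm_elem N 0) (sum_list xs)"
      unfolding sum_xs by (rule not_mdvd)
    ultimately show "\<exists>xs. length xs = n \<and> set xs \<subseteq> exp_puiseux r N - munits (exp_puiseux r N)
        \<and> \<not> mdvd (exp_puiseux r N) (r ^ nm_elem N 0) (sum_list xs)"
      by blast
  qed
  then show ?thesis
    using not_mdvd by blast
qed

end
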